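(* Let $X$ be a Baire space and let $Y$ be a first countable, hereditarily Baire $R_0$-space. Then $X\times Y$ is a Baire space.
   Context: A topological space is a Baire space if every countable intersection of dense open subsets is dense. A space is hereditarily Baire if every nonempty closed subspace is a Baire space. A space is $R_0$ if every open set contains the closure of each of its points. *)

theory Defs
  imports "HOL-Analysis.Analysis"
begin

text \<open>A topological space is a Baire space if every countable intersection of
  dense open subsets is dense.  (The empty family is allowed; its intersection is
  taken relative to the whole space.)\<close>
definition Baire_space :: "'a topology \<Rightarrow> bool" where
  "Baire_space X \<longleftrightarrow>
     (\<forall>\<G>. countable \<G> \<and> (\<forall>U\<in>\<G>. openin X U \<and> X closure_of U = topspace X)
        \<longrightarrow> X closure_of (topspace X \<inter> \<Inter>\<G>) = topspace X)"

definition hereditarily_Baire_space :: "'a topology \<Rightarrow> bool" where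
  "hereditarily_Baire_space X \<longleftrightarrow>
     (\<forall>C. closedin X C \<and> C \<noteq> {} \<longrightarrow> Baire_space (subtopology X C))"

definition R0_space :: "'a topology \<Rightarrow> bool" where
  "R0_space X \<longleftrightarrow> (\<forall>U x. openin X U \<and> x \<in> U \<longrightarrow> X closure_of {x} \<subseteq> U)"

end

theory Submission
  imports Defs
begin

text \<open>Given dense open sets \<open>W n\<close> in \<open>X \<times> Y\<close> and a nonempty box \<open>U \<times> V\<close>, grow inside
  \<open>U\<close> a tree of open sets whose levels are pairwise disjoint and dense in \<open>U\<close>. Each new node
  comes with a point \<open>y (j + 1)\<close> of \<open>Y\<close> in the \<open>k\<close>-th basic neighbourhood of an earlier
  point \<open>y i\<close> such that \<open>node \<times> {y (j + 1)} \<subseteq> W n\<close>, where \<open>j\<close> enumerates all triples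
  \<open>(i, k, n)\<close>. As \<open>X\<close> is Baire, some \<open>x \<in> U\<close> lies on a branch. Then each section
  \<open>{y. (x, y) \<in> W n}\<close> is open and dense in the closure \<open>F\<close> of \<open>range y\<close>, a Baire space
  since \<open>Y\<close> is hereditarily Baire, and \<open>F\<close> meets \<open>V \<ni> y 0\<close>; so some \<open>y \<in> V\<close> lies
  in every section.\<close>

lemma Baire_space_Inter_meets_open:
  fixes G :: "nat \<Rightarrow> 'a set"
  assumes "Baire_space X" "\<And>n. openin X (G n)" "\<And>n. X closure_of G n = topspace X"
    and "openin X T" "T \<noteq> {}"
  shows "\<exists>x\<in>T. \<forall>n. x \<in> G n"
proof -
  have "countable (range G)"
    by (rule countable_image) simp
  then have "countable (range G) \<and> (\<forall>U\<in>range G. openin X U \<and> X closure_of U = topspace X)"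
    using assms(2,3) by simp
  then have "X closure_of (topspace X \<inter> \<Inter>(range G)) = topspace X"
    by (rule assms(1)[unfolded Baire_space_def, rule_format])
  then have "(topspace X \<inter> \<Inter>(range G)) \<inter> T \<noteq> {}"
    using assms(4,5) unfolding dense_intersects_open by blast
  then show ?thesis
    by blast
qed

lemma Baire_spaceI:
  assumes "\<And>G T. (\<And>n::nat. openin X (G n)) \<Longrightarrow> (\<And>n. X closure_of G n = topspace X) \<Longrightarrow>
             openin X T \<Longrightarrow> T \<noteq> {} \<Longrightarrow> \<exists>x\<in>T. \<forall>n. x \<in> G n"
  shows "Baire_space X"
  unfolding Baire_space_def
proof (intro allI impI)
  fix \<G> assume \<G>: "countable \<G> \<and> (\<forall>U\<in>\<G>. openin X U \<and> X closure_of U = topspace X)"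
  show "X closure_of (topspace X \<inter> \<Inter>\<G>) = topspace X"
  proof (cases "\<G> = {}")
    case False
    then have range: "range (from_nat_into \<G>) = \<G>"
      using \<G> by (simp add: range_from_nat_into)
    have dense_open: "openin X (from_nat_into \<G> n) \<and> X closure_of from_nat_into \<G> n = topspace X" for n
      using \<G> False by (simp add: from_nat_into)
    have "(topspace X \<inter> \<Inter>\<G>) \<inter> T \<noteq> {}" if T: "openin X T" "T \<noteq> {}" for T
    proof -
      obtain x where "x \<in> T" "\<forall>n. x \<in> from_nat_into \<G> n"
        using assms[of "from_nat_into \<G>" T] dense_open T by blast
      then show ?thesis
        using openin_subset[OF T(1)] range by blast
    qed
    then show ?thesis
      unfolding dense_intersects_open by blast
  qed simp
qed

lemma Baire_space_Inter_meets_open_local: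
  fixes G :: "nat \<Rightarrow> 'a set"
  assumes X: "Baire_space X" and U: "openin X U" "U \<noteq> {}"
    and G: "\<And>n. openin X (G n)" "\<And>n. U \<subseteq> X closure_of G n"
  shows "\<exists>x\<in>U. \<forall>n. x \<in> G n"
proof -
  define G' where "G' n = G n \<union> (topspace X - X closure_of U)" for n
  have "openin X (G' n)" for n
    unfolding G'_def using G(1) by (intro openin_Un openin_diff openin_topspace closedin_closure_of)
  moreover have "X closure_of G' n = topspace X" for n
  proof -
    have "X closure_of U \<subseteq> X closure_of G' n"
      using G(2)[of n] closure_of_mono[of "G n" "G' n"] unfolding G'_def
      by (intro closure_of_minimal) auto
    moreover have "topspace X - X closure_of U \<subseteq> X closure_of G' n"
      using closure_of_subset[of "G' n" X] openin_subset[OF G(1)] unfolding G'_def by blast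
    ultimately show ?thesis
      using closure_of_subset_topspace[of X "G' n"] by blast
  qed
  ultimately obtain x where "x \<in> U" "\<forall>n. x \<in> G' n"
    using Baire_space_Inter_meets_open[OF X _ _ U] by blast
  moreover have "x \<in> X closure_of U"
    using \<open>x \<in> U\<close> closure_of_subset[OF openin_subset[OF U(1)]] by blast
  ultimately show ?thesis
    unfolding G'_def by blast
qed

lemma exists_disjoint_family_dense_in:
  assumes P: "openin X P"
    and good: "\<And>Q. openin X Q \<Longrightarrow> Q \<noteq> {} \<Longrightarrow> Q \<subseteq> P \<Longrightarrow> \<exists>U. openin X U \<and> U \<noteq> {} \<and> U \<subseteq> Q \<and> g U"
  shows "\<exists>\<C>. (\<forall>U\<in>\<C>. openin X U \<and> U \<noteq> {} \<and> U \<subseteq> P \<and> g U) \<and> pairwise disjnt \<C>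
             \<and> P \<subseteq> X closure_of \<Union>\<C>"
proof -
  define A where "A = {\<C>. (\<forall>U\<in>\<C>. openin X U \<and> U \<noteq> {} \<and> U \<subseteq> P \<and> g U) \<and> pairwise disjnt \<C>}"
  have "\<Union>\<K> \<in> A" if "\<K> \<in> chains A" for \<K>
  proof -
    have "pairwise disjnt (\<Union>\<K>)"
    proof (rule pairwiseI)
      fix U V assume "U \<in> \<Union>\<K>" "V \<in> \<Union>\<K>" "U \<noteq> V"
      then obtain \<C>1 \<C>2 where "\<C>1 \<in> \<K>" "\<C>2 \<in> \<K>" "U \<in> \<C>1" "V \<in> \<C>2"
        by auto
      moreover have "\<C>1 \<subseteq> \<C>2 \<or> \<C>2 \<subseteq> \<C>1" "pairwise disjnt \<C>1" "pairwise disjnt \<C>2"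
        using \<open>\<K> \<in> chains A\<close> \<open>\<C>1 \<in> \<K>\<close> \<open>\<C>2 \<in> \<K>\<close>
        by (auto simp: chains_def chain_subset_def A_def)
      ultimately show "disjnt U V"
        using \<open>U \<noteq> V\<close> by (metis pairwiseD subsetD)
    qed
    then show ?thesis
      using that by (auto simp: chains_def A_def)
  qed
  then obtain \<M> where \<M>: "\<M> \<in> A" and max: "\<And>\<C>. \<C> \<in> A \<Longrightarrow> \<M> \<subseteq> \<C> \<Longrightarrow> \<C> = \<M>"
    using Zorn_Lemma[of A] by blast
  have "p \<in> X closure_of \<Union>\<M>" if "p \<in> P" for p
    unfolding in_closure_of
  proof (intro conjI allI impI)
    show "p \<in> topspace X"
      using that openin_subset[OF P] by blast
    fix Q assume Q: "p \<in> Q \<and> openin X Q"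
    show "\<exists>y. y \<in> \<Union>\<M> \<and> y \<in> Q"
    proof (rule ccontr)
      assume disjoint: "\<nexists>y. y \<in> \<Union>\<M> \<and> y \<in> Q"
      obtain U where U: "openin X U" "U \<noteq> {}" "U \<subseteq> Q \<inter> P" "g U"
        using good[of "Q \<inter> P"] Q P \<open>p \<in> P\<close> by blast
      then have "insert U \<M> \<in> A"
        using \<M> disjoint unfolding A_def by (auto simp: pairwise_insert disjnt_def)
      moreover have "U \<notin> \<M>"
        using U disjoint by blast
      ultimately show False
        using max by blast
    qed
  qed
  then show ?thesis
    using \<M> unfolding A_def by blast
qed

locale Baire_branching =
  fixes X :: "'a topology" and I :: "'c \<Rightarrow> bool" and step :: "nat \<Rightarrow> 'c \<Rightarrow> 'c \<Rightarrow> 'a set \<Rightarrow> bool"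
    and U0 :: "'a set" and c0 :: 'c
  assumes grow: "\<And>m c Q. I c \<Longrightarrow> openin X Q \<Longrightarrow> Q \<noteq> {} \<Longrightarrow>
                   \<exists>U c'. openin X U \<and> U \<noteq> {} \<and> U \<subseteq> Q \<and> I c' \<and> step m c c' U"
    and U0: "openin X U0" and c0: "I c0"
begin

definition successor_family :: "nat \<Rightarrow> 'c \<Rightarrow> 'a set \<Rightarrow> 'a set set" where
  "successor_family m c U = (SOME \<C>.
     (\<forall>V\<in>\<C>. openin X V \<and> V \<noteq> {} \<and> V \<subseteq> U \<and> (\<exists>c'. I c' \<and> step m c c' V)) \<and>
     pairwise disjnt \<C> \<and> U \<subseteq> X closure_of \<Union>\<C>)"

definition successor_label :: "nat \<Rightarrow> 'c \<Rightarrow> 'a set \<Rightarrow> 'c" where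
  "successor_label m c V = (SOME c'. I c' \<and> step m c c' V)"

definition children :: "nat \<Rightarrow> 'a set \<times> 'c \<Rightarrow> ('a set \<times> 'c) set" where
  "children m s = (\<lambda>V. (V, successor_label m (snd s) V)) ` successor_family m (snd s) (fst s)"

primrec level :: "nat \<Rightarrow> ('a set \<times> 'c) set" where
  "level 0 = {(U0, c0)}"
| "level (Suc m) = (\<Union>s\<in>level m. children m s)"

lemma successor_family:
  assumes "I c" "openin X U"
  shows "\<And>V. V \<in> successor_family m c U \<Longrightarrow>
           openin X V \<and> V \<noteq> {} \<and> V \<subseteq> U \<and> I (successor_label m c V) \<and> step m c (successor_label m c V) V"
    and "pairwise disjnt (successor_family m c U)"
    and "U \<subseteq> X closure_of \<Union>(successor_family m c U)"
proof -
  have "\<exists>\<C>. (\<forall>V\<in>\<C>. openin X V \<and> V \<noteq> {} \<and> V \<subseteq> U \<and> (\<exists>c'. I c' \<and> step m c c' V)) \<and>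
          pairwise disjnt \<C> \<and> U \<subseteq> X closure_of \<Union>\<C>"
  proof (rule exists_disjoint_family_dense_in[OF assms(2)])
    fix Q assume "openin X Q" "Q \<noteq> {}" "Q \<subseteq> U"
    then obtain V c' where "openin X V" "V \<noteq> {}" "V \<subseteq> Q" "I c'" "step m c c' V"
      using grow[OF assms(1), of Q m] by blast
    then show "\<exists>V. openin X V \<and> V \<noteq> {} \<and> V \<subseteq> Q \<and> (\<exists>c'. I c' \<and> step m c c' V)"
      by blast
  qed
  then have fam: "(\<forall>V\<in>successor_family m c U. openin X V \<and> V \<noteq> {} \<and> V \<subseteq> U \<and> (\<exists>c'. I c' \<and> step m c c' V)) \<and>
      pairwise disjnt (successor_family m c U) \<and> U \<subseteq> X closure_of \<Union>(successor_family m c U)"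
    unfolding successor_family_def by (rule someI_ex)
  then show "pairwise disjnt (successor_family m c U)" "U \<subseteq> X closure_of \<Union>(successor_family m c U)"
    by blast+
  fix V assume V: "V \<in> successor_family m c U"
  then have "\<exists>c'. I c' \<and> step m c c' V"
    using fam by blast
  then have "I (successor_label m c V) \<and> step m c (successor_label m c V) V"
    unfolding successor_label_def by (rule someI_ex)
  then show "openin X V \<and> V \<noteq> {} \<and> V \<subseteq> U \<and> I (successor_label m c V) \<and> step m c (successor_label m c V) V"
    using fam V by blast
qed

lemma children:
  assumes "openin X (fst s)" "I (snd s)" "t \<in> children m s"
  shows "openin X (fst t) \<and> I (snd t) \<and> fst t \<subseteq> fst s \<and> step m (snd s) (snd t) (fst t)"
proof -
  obtain V where V: "V \<in> successor_family m (snd s) (fst s)" "t = (V, successor_label m (snd s) V)"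
    using assms(3) unfolding children_def by blast
  show ?thesis
    using successor_family(1)[OF assms(2,1) V(1)] V(2) by simp
qed

lemma level_node: "s \<in> level m \<Longrightarrow> openin X (fst s) \<and> I (snd s)"
proof (induction m arbitrary: s)
  case 0
  then show ?case
    using U0 c0 by simp
next
  case (Suc m)
  then obtain r where "r \<in> level m" "s \<in> children m r"
    by auto
  then show ?case
    using Suc.IH children by blast
qed

lemma level_parent:
  assumes "t \<in> level (Suc m)"
  obtains s where "s \<in> level m" "fst t \<subseteq> fst s" "step m (snd s) (snd t) (fst t)"
proof -
  obtain s where s: "s \<in> level m" "t \<in> children m s"
    using assms by auto
  then show ?thesis
    using that children level_node by blast
qed

lemma level_disjoint: "s \<in> level m \<Longrightarrow> t \<in> level m \<Longrightarrow> s \<noteq> t \<Longrightarrow> disjnt (fst s) (fst t)"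
proof (induction m arbitrary: s t)
  case 0
  then show ?case by simp
next
  case (Suc m)
  obtain r where r: "r \<in> level m" "s \<in> children m r"
    using Suc.prems(1) by auto
  obtain r' where r': "r' \<in> level m" "t \<in> children m r'"
    using Suc.prems(2) by auto
  show ?case
  proof (cases "r = r'")
    case True
    obtain V V' where "V \<in> successor_family m (snd r) (fst r)" "V' \<in> successor_family m (snd r) (fst r)"
      and "s = (V, successor_label m (snd r) V)" "t = (V', successor_label m (snd r) V')"
      using r r' True unfolding children_def by blast
    moreover have "pairwise disjnt (successor_family m (snd r) (fst r))"
      using level_node[OF r(1)] successor_family(2) by blast
    ultimately show ?thesis
      using Suc.prems(3) by (auto dest: pairwiseD)
  next
    case False
    then have "disjnt (fst r) (fst r')"
      using Suc.IH r(1) r'(1) by blast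
    moreover have "fst s \<subseteq> fst r" "fst t \<subseteq> fst r'"
      using children level_node r r' by blast+
    ultimately show ?thesis
      by (meson disjnt_subset1 disjnt_subset2)
  qed
qed

lemma level_dense: "U0 \<subseteq> X closure_of \<Union>(fst ` level m)"
proof (induction m)
  case 0
  then show ?case
    using closure_of_subset[OF openin_subset[OF U0]] by simp
next
  case (Suc m)
  have "fst s \<subseteq> X closure_of \<Union>(fst ` level (Suc m))" if s: "s \<in> level m" for s
  proof -
    have "successor_family m (snd s) (fst s) = fst ` children m s"
      unfolding children_def by force
    then have "\<Union>(successor_family m (snd s) (fst s)) \<subseteq> \<Union>(fst ` level (Suc m))"
      using s by auto
    moreover have "fst s \<subseteq> X closure_of \<Union>(successor_family m (snd s) (fst s))"
      using level_node[OF s] successor_family(3) by blast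
    ultimately show ?thesis
      using closure_of_mono by blast
  qed
  then have "X closure_of \<Union>(fst ` level m) \<subseteq> X closure_of \<Union>(fst ` level (Suc m))"
    by (intro closure_of_minimal) auto
  then show ?case
    using Suc.IH by blast
qed

theorem Baire_branch:
  assumes "Baire_space X" "U0 \<noteq> {}"
  shows "\<exists>x\<in>U0. \<exists>c. c 0 = c0 \<and> (\<forall>m. I (c m) \<and> (\<exists>U. x \<in> U \<and> step m (c m) (c (Suc m)) U))"
proof -
  have "openin X (\<Union>(fst ` level m))" for m
    using level_node by blast
  then obtain x where x: "x \<in> U0" "\<And>m. x \<in> \<Union>(fst ` level m)"
    using Baire_space_Inter_meets_open_local[OF assms(1) U0 assms(2), of "\<lambda>m. \<Union>(fst ` level m)"]
      level_dense by blast
  then have "\<forall>m. \<exists>s. s \<in> level m \<and> x \<in> fst s"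
    by blast
  then obtain S where S: "\<And>m. S m \<in> level m \<and> x \<in> fst (S m)"
    by metis
  have "\<exists>U. x \<in> U \<and> step m (snd (S m)) (snd (S (Suc m))) U" for m
  proof -
    obtain s where s: "s \<in> level m" "fst (S (Suc m)) \<subseteq> fst s" "step m (snd s) (snd (S (Suc m))) (fst (S (Suc m)))"
      using level_parent S by blast
    have "s = S m"
      using level_disjoint[OF s(1), of "S m"] S[of m] S[of "Suc m"] s(2) unfolding disjnt_def by blast
    then show ?thesis
      using S s(3) by blast
  qed
  moreover have "I (snd (S m))" for m
    using S level_node by blast
  moreover have "snd (S 0) = c0"
    using S[of 0] by simp
  ultimately show ?thesis
    using x(1) by (intro bexI[of _ x] exI[of _ "\<lambda>m. snd (S m)"]) auto
qed

end

lemma first_countable_neighbourhood_sequences: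
  assumes "first_countable Y"
  obtains B :: "'a \<Rightarrow> nat \<Rightarrow> 'a set" where
    "\<And>y k. y \<in> topspace Y \<Longrightarrow> openin Y (B y k) \<and> y \<in> B y k"
    "\<And>y Q. openin Y Q \<Longrightarrow> y \<in> Q \<Longrightarrow> \<exists>k. B y k \<subseteq> Q"
proof -
  have "\<exists>\<N>. countable \<N> \<and> \<N> \<noteq> {} \<and> (\<forall>V\<in>\<N>. openin Y V \<and> y \<in> V) \<and>
          (\<forall>Q. openin Y Q \<and> y \<in> Q \<longrightarrow> (\<exists>V\<in>\<N>. V \<subseteq> Q))" if y: "y \<in> topspace Y" for y
  proof -
    obtain \<B> where \<B>: "countable \<B>" "\<forall>V\<in>\<B>. openin Y V"
      "\<forall>Q. openin Y Q \<and> y \<in> Q \<longrightarrow> (\<exists>V\<in>\<B>. y \<in> V \<and> V \<subseteq> Q)"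
      using bspec[OF assms[unfolded first_countable_def] y] by blast
    then have "{V\<in>\<B>. y \<in> V} \<noteq> {}"
      using y openin_topspace by blast
    with \<B> show ?thesis
      by (intro exI[of _ "{V\<in>\<B>. y \<in> V}"]) auto
  qed
  then obtain \<N> where \<N>: "\<And>y. y \<in> topspace Y \<Longrightarrow> countable (\<N> y) \<and> \<N> y \<noteq> {} \<and>
      (\<forall>V\<in>\<N> y. openin Y V \<and> y \<in> V) \<and> (\<forall>Q. openin Y Q \<and> y \<in> Q \<longrightarrow> (\<exists>V\<in>\<N> y. V \<subseteq> Q))"
    by metis
  show ?thesis
  proof
    show "openin Y (from_nat_into (\<N> y) k) \<and> y \<in> from_nat_into (\<N> y) k" if y: "y \<in> topspace Y" for y k
    proof -
      have "from_nat_into (\<N> y) k \<in> \<N> y"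
        using \<N>[OF y] by (simp add: from_nat_into)
      then show ?thesis
        using \<N>[OF y] by blast
    qed
    show "\<exists>k. from_nat_into (\<N> y) k \<subseteq> Q" if Q: "openin Y Q" "y \<in> Q" for y Q
    proof -
      have y: "y \<in> topspace Y"
        using Q openin_subset by blast
      then obtain V where V: "V \<in> \<N> y" "V \<subseteq> Q"
        using \<N> Q by blast
      have "countable (\<N> y)"
        using \<N>[OF y] by blast
      then obtain k where "from_nat_into (\<N> y) k = V"
        using from_nat_into_surj[OF _ V(1)] by metis
      then show ?thesis
        using V(2) by blast
    qed
  qed
qed

text \<open>The bound \<open>\<iota> j \<le> j\<close> makes step \<open>j\<close> of the construction refer only to points
  already chosen.\<close>
lemma exists_enumeration_of_triples:
  "\<exists>(\<iota> :: nat \<Rightarrow> nat) (\<kappa> :: nat \<Rightarrow> nat) (\<nu> :: nat \<Rightarrow> nat).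
     (\<forall>j. \<iota> j \<le> j) \<and> (\<forall>i k n. \<exists>j. \<iota> j = i \<and> \<kappa> j = k \<and> \<nu> j = n)"
proof (rule exI[of _ "\<lambda>j. fst (prod_decode j)"],
    rule exI[of _ "\<lambda>j. fst (prod_decode (snd (prod_decode j)))"],
    rule exI[of _ "\<lambda>j. snd (prod_decode (snd (prod_decode j)))"], intro conjI allI)
  show "fst (prod_decode j) \<le> j" for j
    by (metis le_prod_encode_1 prod.collapse prod_decode_inverse)
  show "\<exists>j. fst (prod_decode j) = i \<and> fst (prod_decode (snd (prod_decode j))) = k \<and>
          snd (prod_decode (snd (prod_decode j))) = n" for i k n
    by (rule exI[of _ "prod_encode (i, prod_encode (k, n))"]) simp
qed

lemma coherent_sequence_diagonal:
  assumes "\<And>m j. j \<le> m \<Longrightarrow> c (Suc m) j = c m j"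
  shows "j \<le> m \<Longrightarrow> c m j = c j j"
proof (induction m)
  case (Suc m)
  then show ?case
    using assms by (cases "j = Suc m") auto
qed simp

lemma hereditarily_Baire_space_Inter_meets_open:
  fixes S :: "nat \<Rightarrow> 'a set"
  assumes Y: "hereditarily_Baire_space Y"
    and S: "\<And>n. openin Y (S n)" "\<And>n. D \<subseteq> Y closure_of (D \<inter> S n)"
    and V: "openin Y V" "V \<inter> D \<noteq> {}"
  shows "\<exists>y\<in>V. \<forall>n. y \<in> S n"
proof -
  define F where "F = Y closure_of D"
  have "Y closure_of (D \<inter> S 0) \<subseteq> F"
    unfolding F_def by (rule closure_of_mono) blast
  then have "D \<subseteq> F"
    using S(2)[of 0] by blast
  moreover have "F \<noteq> {}"
    using V(2) \<open>D \<subseteq> F\<close> by blast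
  ultimately have "Baire_space (subtopology Y F)"
    using Y closedin_closure_of[of Y D] unfolding hereditarily_Baire_space_def F_def by blast
  moreover have "openin (subtopology Y F) (S n \<inter> F)" for n
    using S(1) by (rule openin_subtopology_Int)
  moreover have "subtopology Y F closure_of (S n \<inter> F) = topspace (subtopology Y F)" for n
  proof -
    have "F \<subseteq> Y closure_of (D \<inter> S n)"
      unfolding F_def using S(2)[of n] by (rule closure_of_minimal) simp
    also have "\<dots> \<subseteq> Y closure_of (S n \<inter> F)"
      using \<open>D \<subseteq> F\<close> by (intro closure_of_mono) blast
    finally have "F \<subseteq> Y closure_of (S n \<inter> F)" .
    moreover have "F \<subseteq> topspace Y"
      unfolding F_def by (rule closure_of_subset_topspace)
    moreover have "F \<inter> (S n \<inter> F) = S n \<inter> F"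
      by blast
    ultimately show ?thesis
      unfolding closure_of_subtopology topspace_subtopology by (simp add: Int_absorb1 Int_absorb2)
  qed
  moreover have "openin (subtopology Y F) (V \<inter> F)" "V \<inter> F \<noteq> {}"
    using openin_subtopology_Int[OF V(1)] V(2) \<open>D \<subseteq> F\<close> by auto
  ultimately have "\<exists>y\<in>V \<inter> F. \<forall>n. y \<in> S n \<inter> F"
    by (rule Baire_space_Inter_meets_open)
  then show ?thesis
    by blast
qed

lemma dense_openin_prod_topology_contains_slice:
  assumes W: "openin (prod_topology X Y) W" "prod_topology X Y closure_of W = topspace (prod_topology X Y)"
    and Q: "openin X Q" "Q \<noteq> {}" and G: "openin Y G" "G \<noteq> {}"
  shows "\<exists>U y. openin X U \<and> U \<noteq> {} \<and> U \<subseteq> Q \<and> y \<in> G \<and> U \<times> {y} \<subseteq> W"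
proof -
  have "openin (prod_topology X Y) (Q \<times> G)" "Q \<times> G \<noteq> {}"
    using Q G by (auto simp: openin_prod_Times_iff)
  then have "W \<inter> (Q \<times> G) \<noteq> {}"
    using W(2) unfolding dense_intersects_open by blast
  then obtain x y where xy: "(x, y) \<in> W" "x \<in> Q" "y \<in> G"
    by auto
  obtain U V where "openin X U" "openin Y V" "x \<in> U" "y \<in> V" "U \<times> V \<subseteq> W"
    using W(1)[unfolded openin_prod_topology_alt, rule_format, OF xy(1)] by blast
  then show ?thesis
    using xy Q(1) by (intro exI[of _ "U \<inter> Q"] exI[of _ y]) auto
qed

lemma Baire_space_point_with_sequence_in_slices:
  fixes X :: "'a topology" and Y :: "'b topology" and W :: "nat \<Rightarrow> ('a \<times> 'b) set"
    and B :: "'b \<Rightarrow> nat \<Rightarrow> 'b set" and \<iota> \<kappa> \<nu> :: "nat \<Rightarrow> nat"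
  assumes X: "Baire_space X"
    and W: "\<And>n. openin (prod_topology X Y) (W n)"
      "\<And>n. prod_topology X Y closure_of W n = topspace (prod_topology X Y)"
    and B: "\<And>y k. y \<in> topspace Y \<Longrightarrow> openin Y (B y k) \<and> y \<in> B y k"
    and \<iota>: "\<And>j. \<iota> j \<le> j"
    and U: "openin X U" "U \<noteq> {}" and y0: "y0 \<in> topspace Y"
  shows "\<exists>x\<in>U. \<exists>ys. ys 0 = y0 \<and> range ys \<subseteq> topspace Y \<and>
           (\<forall>j. ys (Suc j) \<in> B (ys (\<iota> j)) (\<kappa> j) \<and> (x, ys (Suc j)) \<in> W (\<nu> j))"
proof -
  \<comment> \<open>A label \<open>c\<close> at depth \<open>m\<close> records the points \<open>c 0, \<dots>, c m\<close> chosen along the branch.\<close>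
  define I where "I c \<longleftrightarrow> range c \<subseteq> topspace Y" for c :: "nat \<Rightarrow> 'b"
  define step where "step m c c' U' \<longleftrightarrow> (\<forall>j\<le>m. c' j = c j) \<and>
      c' (Suc m) \<in> B (c (\<iota> m)) (\<kappa> m) \<and> U' \<times> {c' (Suc m)} \<subseteq> W (\<nu> m)" for m c c' U'
  interpret Baire_branching X I step U "\<lambda>_. y0"
  proof
    fix m c Q assume c: "I c" and Q: "openin X Q" "Q \<noteq> {}"
    have "openin Y (B (c (\<iota> m)) (\<kappa> m))" "B (c (\<iota> m)) (\<kappa> m) \<noteq> {}"
      using B c unfolding I_def by blast+
    then obtain U' y where U': "openin X U'" "U' \<noteq> {}" "U' \<subseteq> Q" "y \<in> B (c (\<iota> m)) (\<kappa> m)"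
      "U' \<times> {y} \<subseteq> W (\<nu> m)"
      using dense_openin_prod_topology_contains_slice[OF W Q] by metis
    then have "y \<in> topspace Y"
      using openin_subset[OF \<open>openin Y (B (c (\<iota> m)) (\<kappa> m))\<close>] by blast
    then have "I (c(Suc m := y))"
      using c unfolding I_def by auto
    moreover have "step m c (c(Suc m := y)) U'"
      using U' \<iota>[of m] unfolding step_def by auto
    ultimately show "\<exists>U' c'. openin X U' \<and> U' \<noteq> {} \<and> U' \<subseteq> Q \<and> I c' \<and> step m c c' U'"
      using U' by blast
  next
    show "openin X U" "I (\<lambda>_. y0)"
      using U(1) y0 unfolding I_def by blast+
  qed
  obtain x c where x: "x \<in> U" and c0: "c 0 = (\<lambda>_. y0)"
    and c: "\<And>m. I (c m) \<and> (\<exists>U'. x \<in> U' \<and> step m (c m) (c (Suc m)) U')"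
    using Baire_branch[OF X U(2)] by blast
  define ys where "ys j = c j j" for j
  have diag: "c m j = ys j" if "j \<le> m" for j m
    unfolding ys_def using coherent_sequence_diagonal[of c] c that unfolding step_def by blast
  have "ys (Suc j) \<in> B (ys (\<iota> j)) (\<kappa> j) \<and> (x, ys (Suc j)) \<in> W (\<nu> j)" for j
    using c[of j] diag[OF \<iota>[of j]] unfolding step_def ys_def by auto
  moreover have "range ys \<subseteq> topspace Y"
    using c unfolding ys_def I_def by auto
  moreover have "ys 0 = y0"
    unfolding ys_def c0 by simp
  ultimately show ?thesis
    using x by blast
qed

lemma range_subset_closure_of_range_Int:
  assumes base: "\<And>y Q. openin Y Q \<Longrightarrow> y \<in> Q \<Longrightarrow> \<exists>k. B y k \<subseteq> Q"
    and onto: "\<And>i k n. \<exists>j. \<iota> j = i \<and> \<kappa> j = k \<and> \<nu> j = n"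
    and ys: "range ys \<subseteq> topspace Y" "\<And>j. ys (Suc j) \<in> B (ys (\<iota> j)) (\<kappa> j) \<inter> S (\<nu> j)"
  shows "range ys \<subseteq> Y closure_of (range ys \<inter> S n)"
proof
  fix y assume "y \<in> range ys"
  then obtain i where i: "y = ys i"
    by blast
  show "y \<in> Y closure_of (range ys \<inter> S n)"
    unfolding in_closure_of
  proof (intro conjI allI impI)
    show "y \<in> topspace Y"
      using ys(1) i by blast
    fix Q assume "y \<in> Q \<and> openin Y Q"
    then obtain k where "B y k \<subseteq> Q"
      using base by blast
    moreover obtain j where "\<iota> j = i" "\<kappa> j = k" "\<nu> j = n"
      using onto by blast
    ultimately have "ys (Suc j) \<in> range ys \<inter> S n \<and> ys (Suc j) \<in> Q"
      using ys(2)[of j] i by auto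
    then show "\<exists>z. z \<in> range ys \<inter> S n \<and> z \<in> Q"
      by blast
  qed
qed

lemma Baire_prod_first_countable_Inter_meets_box:
  fixes X :: "'a topology" and Y :: "'b topology" and W :: "nat \<Rightarrow> ('a \<times> 'b) set"
  assumes X: "Baire_space X" and Y: "first_countable Y" "hereditarily_Baire_space Y"
    and W: "\<And>n. openin (prod_topology X Y) (W n)"
      "\<And>n. prod_topology X Y closure_of W n = topspace (prod_topology X Y)"
    and U: "openin X U" "U \<noteq> {}" and V: "openin Y V" "V \<noteq> {}"
  shows "\<exists>x\<in>U. \<exists>y\<in>V. \<forall>n. (x, y) \<in> W n"
proof -
  obtain B :: "'b \<Rightarrow> nat \<Rightarrow> 'b set"
    where B: "\<And>y k. y \<in> topspace Y \<Longrightarrow> openin Y (B y k) \<and> y \<in> B y k"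
      and B_base: "\<And>y Q. openin Y Q \<Longrightarrow> y \<in> Q \<Longrightarrow> \<exists>k. B y k \<subseteq> Q"
    using first_countable_neighbourhood_sequences[OF Y(1)] by blast
  obtain \<iota> \<kappa> \<nu> :: "nat \<Rightarrow> nat" where \<iota>: "\<And>j. \<iota> j \<le> j"
    and onto: "\<And>i k n. \<exists>j. \<iota> j = i \<and> \<kappa> j = k \<and> \<nu> j = n"
    using exists_enumeration_of_triples by metis
  obtain y0 where y0: "y0 \<in> V"
    using V(2) by blast
  then have "y0 \<in> topspace Y"
    using openin_subset[OF V(1)] by blast
  then obtain x ys where x: "x \<in> U" and ys: "ys 0 = y0" "range ys \<subseteq> topspace Y"
    "\<forall>j. ys (Suc j) \<in> B (ys (\<iota> j)) (\<kappa> j) \<and> (x, ys (Suc j)) \<in> W (\<nu> j)"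
    using Baire_space_point_with_sequence_in_slices[where W = W and B = B and \<kappa> = \<kappa> and \<nu> = \<nu>, OF X W B \<iota> U]
    by blast
  define S where "S n = {y \<in> topspace Y. (x, y) \<in> W n}" for n
  have "continuous_map Y (prod_topology X Y) (\<lambda>y. (x, y))"
    using x openin_subset[OF U(1)] by (auto intro!: continuous_map_pairedI)
  then have "openin Y (S n)" for n
    unfolding S_def using W(1) by (rule openin_continuous_map_preimage)
  moreover have "range ys \<subseteq> Y closure_of (range ys \<inter> S n)" for n
    using ys unfolding S_def by (intro range_subset_closure_of_range_Int[OF B_base onto]) auto
  moreover have "V \<inter> range ys \<noteq> {}"
    using y0 ys(1) by blast
  ultimately obtain y where "y \<in> V" "\<forall>n. y \<in> S n"
    using hereditarily_Baire_space_Inter_meets_open[OF Y(2) _ _ V(1)] by metis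
  then show ?thesis
    using x unfolding S_def by blast
qed

theorem corollary3p3:
  fixes X :: "'a topology" and Y :: "'b topology"
  assumes "Baire_space X"
    and "first_countable Y"
    and "hereditarily_Baire_space Y"
    and "R0_space Y"
  shows "Baire_space (prod_topology X Y)"
proof (rule Baire_spaceI)
  fix W :: "nat \<Rightarrow> ('a \<times> 'b) set" and T
  assume W: "\<And>n. openin (prod_topology X Y) (W n)"
    "\<And>n. prod_topology X Y closure_of W n = topspace (prod_topology X Y)"
    and T: "openin (prod_topology X Y) T" "T \<noteq> {}"
  obtain a b where "(a, b) \<in> T"
    using T(2) by auto
  then obtain U V where U: "openin X U" "a \<in> U" and V: "openin Y V" "b \<in> V" and UV: "U \<times> V \<subseteq> T"
    using T(1)[unfolded openin_prod_topology_alt, rule_format] by blast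
  have "U \<noteq> {}" "V \<noteq> {}"
    using U(2) V(2) by auto
  then obtain x y where "x \<in> U" "y \<in> V" "\<forall>n. (x, y) \<in> W n"
    using Baire_prod_first_countable_Inter_meets_box[of X Y W U V, OF assms(1-3) W U(1) _ V(1)] by blast
  then show "\<exists>z\<in>T. \<forall>n. z \<in> W n"
    using UV by blast
qed

end
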